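(* Let $U$ be a finite nonempty set, let $(T,I,N)$ be a residual triplet, and let $\widetilde{R}$ be a $T$-preorder relation on $U$. Let $u,v\in U$ and $\lambda_1,\lambda_2\in[0,1]$. Then the fuzzy granules $\widetilde{R}^+_{\lambda_1}(u)$ and $\widetilde{R}^-_{\lambda_2}(v)$ are $T$-disjoint if and only if $$T(\lambda_1,\lambda_2)\le N(\widetilde{R}(v,u)).$$
   Context: A residual triplet $(T,I,N)$ consists of a left-continuous $t$-norm $T$, its residual implicator $I(x,y)=\sup\{\beta\in[0,1]: T(x,\beta)\le y\}$, and the induced negator $N(x)=I(x,0)$. A fuzzy relation $\widetilde{R}:U\times U\to[0,1]$ is a $T$-preorder if it is reflexive ($\widetilde{R}(u,u)=1$) and $T$-transitive ($T(\widetilde{R}(u,v),\widetilde{R}(v,w))\le \widetilde{R}(u,w)$ for all $u,v,w$). For $u\in U$ and $\lambda\in[0,1]$, the granule $\widetilde{R}^+_\lambda(u)$ is the fuzzy set on $U$ with membership $w\mapsto T(\widetilde{R}(w,u),\lambda)$, and $\widetilde{R}^-_\lambda(u)$ is the fuzzy set with membership $w\mapsto T(\widetilde{R}(u,w),\lambda)$. Two fuzzy sets $A,B$ on $U$ are $T$-disjoint if $T(A(w),B(w))=0$ for every $w\in U$. *)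

theory Defs
  imports "HOL-Analysis.Analysis"
begin

definition t_norm :: "(real \<Rightarrow> real \<Rightarrow> real) \<Rightarrow> bool" where
  "t_norm T \<longleftrightarrow>
     (\<forall>x\<in>{0..1}. \<forall>y\<in>{0..1}. T x y \<in> {0..1}) \<and>
     (\<forall>x\<in>{0..1}. \<forall>y\<in>{0..1}. T x y = T y x) \<and>
     (\<forall>x\<in>{0..1}. \<forall>y\<in>{0..1}. \<forall>z\<in>{0..1}. T x (T y z) = T (T x y) z) \<and>
     (\<forall>x\<in>{0..1}. \<forall>y\<in>{0..1}. \<forall>z\<in>{0..1}. y \<le> z \<longrightarrow> T x y \<le> T x z) \<and>
     (\<forall>x\<in>{0..1}. T x 1 = x)"

text \<open>Left-continuity (in the first argument; by commutativity also in the second).\<close>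
definition left_continuous_t_norm :: "(real \<Rightarrow> real \<Rightarrow> real) \<Rightarrow> bool" where
  "left_continuous_t_norm T \<longleftrightarrow> t_norm T \<and>
     (\<forall>x\<in>{0<..1}. \<forall>y\<in>{0..1}. ((\<lambda>z. T z y) \<longlongrightarrow> T x y) (at_left x))"

definition res_impl :: "(real \<Rightarrow> real \<Rightarrow> real) \<Rightarrow> real \<Rightarrow> real \<Rightarrow> real" where
  "res_impl T x y = Sup {\<beta> \<in> {0..1}. T x \<beta> \<le> y}"

definition res_neg :: "(real \<Rightarrow> real \<Rightarrow> real) \<Rightarrow> real \<Rightarrow> real" where
  "res_neg T x = res_impl T x 0"

definition fuzzy_rel_on :: "'a set \<Rightarrow> ('a \<Rightarrow> 'a \<Rightarrow> real) \<Rightarrow> bool" where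
  "fuzzy_rel_on U R \<longleftrightarrow> (\<forall>u\<in>U. \<forall>v\<in>U. R u v \<in> {0..1})"

definition T_preorder :: "(real \<Rightarrow> real \<Rightarrow> real) \<Rightarrow> 'a set \<Rightarrow> ('a \<Rightarrow> 'a \<Rightarrow> real) \<Rightarrow> bool" where
  "T_preorder T U R \<longleftrightarrow> fuzzy_rel_on U R \<and>
     (\<forall>u\<in>U. R u u = 1) \<and>
     (\<forall>u\<in>U. \<forall>v\<in>U. \<forall>w\<in>U. T (R u v) (R v w) \<le> R u w)"

definition granule_plus :: "(real \<Rightarrow> real \<Rightarrow> real) \<Rightarrow> ('a \<Rightarrow> 'a \<Rightarrow> real) \<Rightarrow> real \<Rightarrow> 'a \<Rightarrow> 'a \<Rightarrow> real" where
  "granule_plus T R lam u = (\<lambda>w. T (R w u) lam)"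

definition granule_minus :: "(real \<Rightarrow> real \<Rightarrow> real) \<Rightarrow> ('a \<Rightarrow> 'a \<Rightarrow> real) \<Rightarrow> real \<Rightarrow> 'a \<Rightarrow> 'a \<Rightarrow> real" where
  "granule_minus T R lam u = (\<lambda>w. T (R u w) lam)"

definition T_disjoint :: "(real \<Rightarrow> real \<Rightarrow> real) \<Rightarrow> 'a set \<Rightarrow> ('a \<Rightarrow> real) \<Rightarrow> ('a \<Rightarrow> real) \<Rightarrow> bool" where
  "T_disjoint T U A B \<longleftrightarrow> (\<forall>w\<in>U. T (A w) (B w) = 0)"

end

theory Submission
  imports Defs
begin

text \<open>
  Unfolding the granules, the T-intersection of the two granules at w equals
  T(T(R v w, R w u), T(l1, l2)), which is largest at w = u, where it is T(R v u, T(l1, l2)),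
  because T-transitivity bounds T(R v w, R w u) by R v u and reflexivity attains this bound.
  So the granules are T-disjoint iff T(R v u, T(l1, l2)) = 0, and by left-continuity
  the residual implicator is adjoint to T, which turns this into T(l1, l2) \<le> N(R v u).
\<close>

lemma left_continuous_t_norm_imp_t_norm: "left_continuous_t_norm T \<Longrightarrow> t_norm T"
  unfolding left_continuous_t_norm_def by blast

lemma t_norm_closed:
  "t_norm T \<Longrightarrow> x \<in> {0..1} \<Longrightarrow> y \<in> {0..1} \<Longrightarrow> T x y \<in> {0..1}"
  unfolding t_norm_def by blast

lemma t_norm_commute:
  "t_norm T \<Longrightarrow> x \<in> {0..1} \<Longrightarrow> y \<in> {0..1} \<Longrightarrow> T x y = T y x"
  unfolding t_norm_def by blast

lemma t_norm_assoc:
  assumes "t_norm T" and "x \<in> {0..1}" "y \<in> {0..1}" "z \<in> {0..1}"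
  shows "T (T x y) z = T x (T y z)"
proof -
  have "T x (T y z) = T (T x y) z"
    using assms unfolding t_norm_def by blast
  then show ?thesis ..
qed

lemma t_norm_mono_right:
  "t_norm T \<Longrightarrow> x \<in> {0..1} \<Longrightarrow> y \<in> {0..1} \<Longrightarrow> z \<in> {0..1} \<Longrightarrow> y \<le> z \<Longrightarrow> T x y \<le> T x z"
  unfolding t_norm_def by blast

lemma t_norm_mono_left:
  assumes "t_norm T" and "x \<in> {0..1}" "y \<in> {0..1}" "z \<in> {0..1}" and "y \<le> z"
  shows "T y x \<le> T z x"
  using t_norm_mono_right[OF assms] t_norm_commute[OF assms(1,2)] assms(3,4) by simp

lemma t_norm_right_one: "t_norm T \<Longrightarrow> x \<in> {0..1} \<Longrightarrow> T x 1 = x"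
  unfolding t_norm_def by blast

lemma t_norm_right_zero:
  assumes "t_norm T" and "x \<in> {0..1}"
  shows "T x 0 = 0"
proof -
  have "T 0 x \<le> T 0 1"
    using t_norm_mono_right[OF assms(1)] assms(2) by simp
  also have "\<dots> = 0"
    using t_norm_right_one[OF assms(1)] by simp
  finally show ?thesis
    using t_norm_closed[OF assms(1), of 0 x] t_norm_commute[OF assms(1), of x 0] assms(2) by simp
qed

lemma t_norm_interchange:
  assumes "t_norm T" and "a \<in> {0..1}" "b \<in> {0..1}" "c \<in> {0..1}" "d \<in> {0..1}"
  shows "T (T a c) (T b d) = T (T a b) (T c d)"
proof -
  have "T (T a c) (T b d) = T a (T c (T b d))"
    using t_norm_assoc[OF assms(1,2,4) t_norm_closed[OF assms(1,3,5)]] .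
  also have "T c (T b d) = T (T c b) d"
    using t_norm_assoc[OF assms(1,4,3,5)] by simp
  also have "T c b = T b c"
    using t_norm_commute[OF assms(1,4,3)] .
  also have "T (T b c) d = T b (T c d)"
    using t_norm_assoc[OF assms(1,3,4,5)] .
  also have "T a (T b (T c d)) = T (T a b) (T c d)"
    using t_norm_assoc[OF assms(1,2,3) t_norm_closed[OF assms(1,4,5)]] by simp
  finally show ?thesis .
qed

lemma res_impl_in_unit:
  assumes "t_norm T" and "x \<in> {0..1}" and "y \<in> {0..1}"
  shows "res_impl T x y \<in> {0..1}"
proof -
  let ?S = "{\<beta> \<in> {0..1}. T x \<beta> \<le> y}"
  have "0 \<in> ?S"
    using assms by (simp add: t_norm_right_zero)
  moreover have "bdd_above ?S"
    by (auto intro: bdd_aboveI[of _ 1])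
  ultimately have "0 \<le> Sup ?S" and "Sup ?S \<le> 1"
    by (auto intro: cSup_upper cSup_least)
  then show ?thesis
    unfolding res_impl_def by simp
qed

text \<open>Left-continuity makes the supremum defining the implicator a maximum.\<close>

lemma res_impl_attained:
  assumes lc: "left_continuous_t_norm T" and x: "x \<in> {0..1}" and y: "y \<in> {0..1}"
  shows "T x (res_impl T x y) \<le> y"
proof -
  have tn: "t_norm T"
    using lc by (rule left_continuous_t_norm_imp_t_norm)
  define S where "S = {\<beta> \<in> {0..1}. T x \<beta> \<le> y}"
  define s where "s = res_impl T x y"
  have s_Sup: "s = Sup S"
    unfolding s_def S_def res_impl_def ..
  have s01: "s \<in> {0..1}"
    unfolding s_def using res_impl_in_unit[OF tn x y] .
  have "0 \<in> S"
    using x y by (simp add: S_def t_norm_right_zero[OF tn])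
  then have below_s: "T x z \<le> y" if "z \<in> {0..1}" "z < s" for z
  proof -
    obtain b where "b \<in> S" "z < b"
      using less_cSupE[of z S] \<open>0 \<in> S\<close> \<open>z < s\<close> s_Sup by blast
    then show ?thesis
      using t_norm_mono_right[OF tn x \<open>z \<in> {0..1}\<close>, of b] by (auto simp: S_def)
  qed
  show ?thesis
  proof (cases "s = 0")
    case True
    then show ?thesis
      using y by (simp add: s_def[symmetric] t_norm_right_zero[OF tn x])
  next
    case False
    with s01 have s_pos: "0 < s" by simp
    have lim: "((\<lambda>z. T z x) \<longlongrightarrow> T s x) (at_left s)"
      using lc s_pos s01 x unfolding left_continuous_t_norm_def by auto
    have "eventually (\<lambda>z. T z x \<le> y) (at_left s)"
      using eventually_at_left_real[OF s_pos]
    proof (rule eventually_mono)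
      fix z assume "z \<in> {0<..<s}"
      with s01 have "z \<in> {0..1}" "z < s" by auto
      then show "T z x \<le> y"
        using below_s t_norm_commute[OF tn x] by metis
    qed
    then have "T s x \<le> y"
      using tendsto_upperbound[OF lim] trivial_limit_at_left_real by blast
    then show ?thesis
      using t_norm_commute[OF tn x s01] by (simp add: s_def)
  qed
qed

lemma res_impl_adjoint:
  assumes lc: "left_continuous_t_norm T"
    and "x \<in> {0..1}" "y \<in> {0..1}" "z \<in> {0..1}"
  shows "T x z \<le> y \<longleftrightarrow> z \<le> res_impl T x y"
proof
  have tn: "t_norm T"
    using lc by (rule left_continuous_t_norm_imp_t_norm)
  show "T x z \<le> y \<Longrightarrow> z \<le> res_impl T x y"
    unfolding res_impl_def using assms by (auto intro!: cSup_upper bdd_aboveI[of _ 1])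
  assume "z \<le> res_impl T x y"
  then have "T x z \<le> T x (res_impl T x y)"
    using assms t_norm_mono_right[OF tn] res_impl_in_unit[OF tn] by blast
  also have "\<dots> \<le> y"
    using res_impl_attained assms by blast
  finally show "T x z \<le> y" .
qed

lemma res_neg_iff:
  assumes lc: "left_continuous_t_norm T" and "x \<in> {0..1}" "z \<in> {0..1}"
  shows "T x z = 0 \<longleftrightarrow> z \<le> res_neg T x"
proof -
  have "t_norm T"
    using lc by (rule left_continuous_t_norm_imp_t_norm)
  then have "T x z \<ge> 0"
    using t_norm_closed assms by fastforce
  then show ?thesis
    using res_impl_adjoint[OF assms(1,2) _ assms(3), of 0] by (simp add: res_neg_def)
qed

lemma T_preorder_in_unit: "T_preorder T U R \<Longrightarrow> a \<in> U \<Longrightarrow> b \<in> U \<Longrightarrow> R a b \<in> {0..1}"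
  unfolding T_preorder_def fuzzy_rel_on_def by blast

lemma T_disjoint_granules_iff:
  assumes tn: "t_norm T" and R: "T_preorder T U R"
    and u: "u \<in> U" and v: "v \<in> U" and l: "l1 \<in> {0..1}" "l2 \<in> {0..1}"
  shows "T_disjoint T U (granule_plus T R l1 u) (granule_minus T R l2 v)
         \<longleftrightarrow> T (R v u) (T l1 l2) = 0"
proof -
  note R01 = T_preorder_in_unit[OF R]
  have L01: "T l1 l2 \<in> {0..1}"
    using t_norm_closed[OF tn l] .
  have meet: "T (granule_plus T R l1 u w) (granule_minus T R l2 v w)
              = T (T (R v w) (R w u)) (T l1 l2)" if w: "w \<in> U" for w
  proof -
    have "T (T (R w u) l1) (T (R v w) l2) = T (T (R w u) (R v w)) (T l1 l2)"
      using t_norm_interchange[OF tn R01[OF w u] R01[OF v w] l] .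
    also have "T (R w u) (R v w) = T (R v w) (R w u)"
      using t_norm_commute[OF tn R01[OF w u] R01[OF v w]] .
    finally show ?thesis
      unfolding granule_plus_def granule_minus_def .
  qed
  have meet_le: "T (T (R v w) (R w u)) (T l1 l2) \<le> T (R v u) (T l1 l2)" if w: "w \<in> U" for w
    using R u v w R01 L01 t_norm_closed[OF tn]
    by (intro t_norm_mono_left[OF tn]) (auto simp: T_preorder_def)
  have meet_nonneg: "T (T (R v w) (R w u)) (T l1 l2) \<ge> 0" if w: "w \<in> U" for w
    using t_norm_closed[OF tn t_norm_closed[OF tn R01[OF v w] R01[OF w u]] L01] by simp
  have meet_at_u: "T (T (R v u) (R u u)) (T l1 l2) = T (R v u) (T l1 l2)"
    using R u v R01 by (simp add: T_preorder_def t_norm_right_one[OF tn])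
  show ?thesis
    unfolding T_disjoint_def
  proof
    assume "\<forall>w\<in>U. T (granule_plus T R l1 u w) (granule_minus T R l2 v w) = 0"
    then show "T (R v u) (T l1 l2) = 0"
      using meet[OF u] meet_at_u u by simp
  next
    assume "T (R v u) (T l1 l2) = 0"
    then show "\<forall>w\<in>U. T (granule_plus T R l1 u w) (granule_minus T R l2 v w) = 0"
      using meet meet_le meet_nonneg by (simp add: order_antisym)
  qed
qed

theorem proposition3:
  fixes U :: "'a set" and T :: "real \<Rightarrow> real \<Rightarrow> real" and R :: "'a \<Rightarrow> 'a \<Rightarrow> real"
    and u v :: 'a and l1 l2 :: real
  assumes "finite U" and "U \<noteq> {}"
    and "left_continuous_t_norm T"
    and "T_preorder T U R"
    and "u \<in> U" and "v \<in> U"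
    and "l1 \<in> {0..1}" and "l2 \<in> {0..1}"
  shows "T_disjoint T U (granule_plus T R l1 u) (granule_minus T R l2 v)
         \<longleftrightarrow> T l1 l2 \<le> res_neg T (R v u)"
proof -
  have tn: "t_norm T"
    using assms(3) by (rule left_continuous_t_norm_imp_t_norm)
  have "R v u \<in> {0..1}"
    using T_preorder_in_unit[OF assms(4,6,5)] .
  moreover have "T l1 l2 \<in> {0..1}"
    using t_norm_closed[OF tn assms(7,8)] .
  ultimately show ?thesis
    using T_disjoint_granules_iff[OF tn assms(4-8)] res_neg_iff[OF assms(3)] by simp
qed

end
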